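(* Let $\sum_{i=1}^n\alpha_i\cdot\lambda x.\vec t_i\in\mathcal S$ be a unitary distribution of closed abstractions. Then it belongs to $[\![\sharp\mathbb B\Rightarrow\sharp\mathbb B]\!]$ if and only if it represents a unitary operator $F:\mathbb C^2\to\mathbb C^2$.
   Context: Calculus. Fix a countably infinite set of variables. Pure values: $v,w::=x\mid\lambda x.\vec{s}\mid *\mid (v_1,v_2)\mid \mathtt{inl}(v)\mid\mathtt{inr}(v)$. Pure terms: $s,t::=v\mid s\,t\mid t;\vec{s}\mid \mathtt{let}\,(x_1,x_2)=t\,\mathtt{in}\,\vec{s}\mid \mathtt{match}\,t\,\{\mathtt{inl}\,x_1\mapsto\vec{s}_1\mid\mathtt{inr}\,x_2\mapsto\vec{s}_2\}$. Term distributions: $\vec{t}::=\vec{0}\mid t\mid \vec{s}+\vec{t}\mid\alpha\cdot\vec{t}$ ($\alpha\in\mathbb{C}$); value distributions are built from pure values only. Top-level distributions are considered modulo the congruence $\equiv$ of weak vector spaces (commutative monoid axioms for $+,\vec 0$; $1\cdot\vec t\equiv\vec t$; $\alpha\cdot(\beta\cdot\vec t)\equiv\alpha\beta\cdot\vec t$; $(\alpha+\beta)\cdot\vec t\equiv\alpha\cdot\vec t+\beta\cdot\vec t$; $\alpha\cdot(\vec t_1+\vec t_2)\equiv\alpha\cdot\vec t_1+\alpha\cdot\vec t_2$), which does not act inside pure terms; $0\cdot t\not\equiv\vec 0$; each distribution has a unique canonical form $\sum_i\alpha_i t_i$ with distinct pure $t_i$. Constructs are extended by linearity (application is bilinear: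 $(\sum_k\gamma_k t_k)(\sum_l\delta_l s_l)=\sum_{k,l}\gamma_k\delta_l t_ks_l$; pairs bilinear; $\mathtt{inl},\mathtt{inr}$ linear; $\mathtt{let},\mathtt{match},;$ linear in their first argument). $\mathtt{tt}:=\mathtt{inl}( * )$, $\mathtt{ff}:=\mathtt{inr}( * )$. Bilinear substitution: $\vec t\langle x:=\vec w\rangle=\sum_j\beta_j\vec t[x:=w_j]$ for $\vec w=\sum_j\beta_jw_j$. Atomic evaluation $\triangleright$ is call-by-value ($\beta_v$: $(\lambda x.\vec t)v\triangleright\vec t[x:=v]$; $*;\vec s\triangleright\vec s$; let on pairs of values; match on $\mathtt{inl}(v)$/$\mathtt{inr}(v)$; congruence rules reducing the argument of an application first, then the function, and the scrutinee of $;$, let, match). $\vec t\succ\vec t'$ iff $\vec t\equiv\alpha\cdot s+\vec r$, $\vec t'\equiv\alpha\cdot\vec s'+\vec r$, $s\triangleright\vec s'$; $\succ^*$ is its reflexive-transitive closure. Semantics. For closed value distributions in canonical form, $\langle\sum_i\alpha_iv_i|\sum_j\beta_jw_j\rangle=\sum_{i,j}\overline{\alpha_i}\beta_j\delta_{v_i,w_j}$; $\mathcal S$ is the set of closed value distributions of norm $1$. $[\![\mathbb U]\!]=\{*\}$, $[\![A+B]\!]=\{\mathtt{inl}(\vec v):\vec v\in[\![A]\!]\}\cup\{\mathtt{inr}(\vec w):\vec w\in[\![B]\!]\}$, $[\![\sharp A]\!]=\mathrm{Span}([\![A]\!])\cap\mathcal S$, $\mathbb B=\mathbb U+\mathbb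 U$, and $[\![A\Rightarrow B]\!]=\{(\sum_{i=1}^n\alpha_i\cdot\lambda x.\vec t_i)\in\mathcal S:\forall\vec v\in[\![A]\!],\ (\sum_i\alpha_i\cdot\vec t_i\langle x:=\vec v\rangle)\Vdash B\}$, where $\vec t\Vdash A$ means $\vec t\succ^*\vec v$ for some $\vec v\in[\![A]\!]$. The Boolean projection $\pi_{\mathbb B}:\mathrm{Span}(\{\mathtt{tt},\mathtt{ff}\})\to\mathbb C^2$ sends $\alpha\cdot\mathtt{tt}\mapsto(\alpha,0)$, $\beta\cdot\mathtt{ff}\mapsto(0,\beta)$, $\alpha\cdot\mathtt{tt}+\beta\cdot\mathtt{ff}\mapsto(\alpha,\beta)$. A closed distribution $\vec t$ represents $F:\mathbb C^2\to\mathbb C^2$ if for all $\vec v\in\mathrm{Span}(\{\mathtt{tt},\mathtt{ff}\})$ there is $\vec w\in\mathrm{Span}(\{\mathtt{tt},\mathtt{ff}\})$ with $\vec t\,\vec v\succ^*\vec w$ and $\pi_{\mathbb B}(\vec w)=F(\pi_{\mathbb B}(\vec v))$. $F$ is unitary if it is linear and preserves the inner product of $\mathbb C^2$. *)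

theory Defs
  imports Complex_Main
begin

section \<open>Syntax (de Bruijn indices for the countably infinite set of variables)\<close>

text \<open>Binders: VLam binds index 0 in its body; LetP t s binds x1 as index 1 and x2 as
  index 0 in s; each branch of Match binds one variable (index 0).\<close>

datatype val = VVar nat | VLam tdist | VStar | VPair val val | VInl val | VInr val
and trm = Val val | App trm trm | Seq trm tdist | LetP trm tdist | Match trm tdist tdist
and tdist = DZero | DT trm | DPlus tdist tdist | DScal complex tdist

primrec lift_v :: "nat \<Rightarrow> val \<Rightarrow> val"
  and lift_t :: "nat \<Rightarrow> trm \<Rightarrow> trm"
  and lift_d :: "nat \<Rightarrow> tdist \<Rightarrow> tdist" where
  "lift_v k (VVar i) = (if i < k then VVar i else VVar (Suc i))"
| "lift_v k (VLam b) = VLam (lift_d (Suc k) b)"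
| "lift_v k VStar = VStar"
| "lift_v k (VPair a b) = VPair (lift_v k a) (lift_v k b)"
| "lift_v k (VInl a) = VInl (lift_v k a)"
| "lift_v k (VInr a) = VInr (lift_v k a)"
| "lift_t k (Val v) = Val (lift_v k v)"
| "lift_t k (App s t) = App (lift_t k s) (lift_t k t)"
| "lift_t k (Seq t s) = Seq (lift_t k t) (lift_d k s)"
| "lift_t k (LetP t s) = LetP (lift_t k t) (lift_d (k + 2) s)"
| "lift_t k (Match t s1 s2) = Match (lift_t k t) (lift_d (Suc k) s1) (lift_d (Suc k) s2)"
| "lift_d k DZero = DZero"
| "lift_d k (DT t) = DT (lift_t k t)"
| "lift_d k (DPlus a b) = DPlus (lift_d k a) (lift_d k b)"
| "lift_d k (DScal \<alpha> a) = DScal \<alpha> (lift_d k a)"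

primrec subst_v :: "nat \<Rightarrow> val \<Rightarrow> val \<Rightarrow> val"
  and subst_t :: "nat \<Rightarrow> val \<Rightarrow> trm \<Rightarrow> trm"
  and subst_d :: "nat \<Rightarrow> val \<Rightarrow> tdist \<Rightarrow> tdist" where
  "subst_v k u (VVar i) = (if i < k then VVar i else if i = k then u else VVar (i - 1))"
| "subst_v k u (VLam b) = VLam (subst_d (Suc k) (lift_v 0 u) b)"
| "subst_v k u VStar = VStar"
| "subst_v k u (VPair a b) = VPair (subst_v k u a) (subst_v k u b)"
| "subst_v k u (VInl a) = VInl (subst_v k u a)"
| "subst_v k u (VInr a) = VInr (subst_v k u a)"
| "subst_t k u (Val v) = Val (subst_v k u v)"
| "subst_t k u (App s t) = App (subst_t k u s) (subst_t k u t)"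
| "subst_t k u (Seq t s) = Seq (subst_t k u t) (subst_d k u s)"
| "subst_t k u (LetP t s) = LetP (subst_t k u t) (subst_d (k + 2) (lift_v 0 (lift_v 0 u)) s)"
| "subst_t k u (Match t s1 s2) =
     Match (subst_t k u t) (subst_d (Suc k) (lift_v 0 u) s1) (subst_d (Suc k) (lift_v 0 u) s2)"
| "subst_d k u DZero = DZero"
| "subst_d k u (DT t) = DT (subst_t k u t)"
| "subst_d k u (DPlus a b) = DPlus (subst_d k u a) (subst_d k u b)"
| "subst_d k u (DScal \<alpha> a) = DScal \<alpha> (subst_d k u a)"

primrec closed_v :: "nat \<Rightarrow> val \<Rightarrow> bool"
  and closed_t :: "nat \<Rightarrow> trm \<Rightarrow> bool"
  and closed_d :: "nat \<Rightarrow> tdist \<Rightarrow> bool" where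
  "closed_v k (VVar i) = (i < k)"
| "closed_v k (VLam b) = closed_d (Suc k) b"
| "closed_v k VStar = True"
| "closed_v k (VPair a b) = (closed_v k a \<and> closed_v k b)"
| "closed_v k (VInl a) = closed_v k a"
| "closed_v k (VInr a) = closed_v k a"
| "closed_t k (Val v) = closed_v k v"
| "closed_t k (App s t) = (closed_t k s \<and> closed_t k t)"
| "closed_t k (Seq t s) = (closed_t k t \<and> closed_d k s)"
| "closed_t k (LetP t s) = (closed_t k t \<and> closed_d (k + 2) s)"
| "closed_t k (Match t s1 s2) = (closed_t k t \<and> closed_d (Suc k) s1 \<and> closed_d (Suc k) s2)"
| "closed_d k DZero = True"
| "closed_d k (DT t) = closed_t k t"
| "closed_d k (DPlus a b) = (closed_d k a \<and> closed_d k b)"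
| "closed_d k (DScal \<alpha> a) = closed_d k a"

section \<open>Weak vector space structure on top-level distributions\<close>

text \<open>Canonical form: the finitely many distinct pure terms occurring, with their
  coefficients (a coefficient may be 0, since 0 t is not congruent to the zero distribution).\<close>
fun canon :: "tdist \<Rightarrow> trm \<Rightarrow> complex option" where
  "canon DZero = (\<lambda>_. None)"
| "canon (DT t) = (\<lambda>s. if s = t then Some 1 else None)"
| "canon (DPlus a b) = (\<lambda>s. case (canon a s, canon b s) of
      (None, y) \<Rightarrow> y | (Some x, None) \<Rightarrow> Some x | (Some x, Some y) \<Rightarrow> Some (x + y))"
| "canon (DScal \<alpha> a) = (\<lambda>s. map_option (\<lambda>x. \<alpha> * x) (canon a s))"

definition deq :: "tdist \<Rightarrow> tdist \<Rightarrow> bool" (infix "\<equiv>\<^sub>d" 50) where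
  "a \<equiv>\<^sub>d b \<longleftrightarrow> canon a = canon b"

fun atoms :: "tdist \<Rightarrow> trm set" where
  "atoms DZero = {}"
| "atoms (DT t) = {t}"
| "atoms (DPlus a b) = atoms a \<union> atoms b"
| "atoms (DScal \<alpha> a) = atoms a"

fun dmap :: "(trm \<Rightarrow> trm) \<Rightarrow> tdist \<Rightarrow> tdist" where
  "dmap f DZero = DZero"
| "dmap f (DT t) = DT (f t)"
| "dmap f (DPlus a b) = DPlus (dmap f a) (dmap f b)"
| "dmap f (DScal \<alpha> a) = DScal \<alpha> (dmap f a)"

fun dbind :: "(trm \<Rightarrow> tdist) \<Rightarrow> tdist \<Rightarrow> tdist" where
  "dbind f DZero = DZero"
| "dbind f (DT t) = f t"
| "dbind f (DPlus a b) = DPlus (dbind f a) (dbind f b)"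
| "dbind f (DScal \<alpha> a) = DScal \<alpha> (dbind f a)"

definition dapp :: "tdist \<Rightarrow> tdist \<Rightarrow> tdist" where
  "dapp a b = dbind (\<lambda>t. dmap (\<lambda>s. App t s) b) a"

definition bsubst :: "tdist \<Rightarrow> tdist \<Rightarrow> tdist" where
  "bsubst b w = dbind (\<lambda>t. case t of Val u \<Rightarrow> subst_d 0 u b | _ \<Rightarrow> DZero) w"

definition inl_t :: "trm \<Rightarrow> trm" where
  "inl_t t = (case t of Val v \<Rightarrow> Val (VInl v) | _ \<Rightarrow> t)"
definition inr_t :: "trm \<Rightarrow> trm" where
  "inr_t t = (case t of Val v \<Rightarrow> Val (VInr v) | _ \<Rightarrow> t)"

definition tt :: trm where "tt = Val (VInl VStar)"
definition ff :: trm where "ff = Val (VInr VStar)"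

section \<open>Call-by-value evaluation\<close>

inductive atred :: "trm \<Rightarrow> tdist \<Rightarrow> bool" where
  beta: "atred (App (Val (VLam b)) (Val v)) (subst_d 0 v b)"
| seq: "atred (Seq (Val VStar) s) s"
| letp: "atred (LetP (Val (VPair v1 v2)) s) (subst_d 0 v1 (subst_d 0 (lift_v 0 v2) s))"
| match_inl: "atred (Match (Val (VInl v)) s1 s2) (subst_d 0 v s1)"
| match_inr: "atred (Match (Val (VInr v)) s1 s2) (subst_d 0 v s2)"
| app_arg: "atred t t' \<Longrightarrow> atred (App s t) (dapp (DT s) t')"
| app_fun: "atred s s' \<Longrightarrow> atred (App s (Val v)) (dapp s' (DT (Val v)))"
| seq_c: "atred t t' \<Longrightarrow> atred (Seq t s) (dmap (\<lambda>u. Seq u s) t')"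
| let_c: "atred t t' \<Longrightarrow> atred (LetP t s) (dmap (\<lambda>u. LetP u s) t')"
| match_c: "atred t t' \<Longrightarrow> atred (Match t s1 s2) (dmap (\<lambda>u. Match u s1 s2) t')"

definition step :: "tdist \<Rightarrow> tdist \<Rightarrow> bool" where
  "step d d' \<longleftrightarrow> (\<exists>\<alpha> s r s'. d \<equiv>\<^sub>d DPlus (DScal \<alpha> (DT s)) r \<and>
                      d' \<equiv>\<^sub>d DPlus (DScal \<alpha> s') r \<and> atred s s')"

definition reds :: "tdist \<Rightarrow> tdist \<Rightarrow> bool" where
  "reds = (\<lambda>a b. step a b \<or> a \<equiv>\<^sub>d b)\<^sup>*\<^sup>*"

section \<open>Semantics\<close>

definition is_val :: "trm \<Rightarrow> bool" where
  "is_val t \<longleftrightarrow> (\<exists>v. t = Val v)"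

definition is_lam :: "trm \<Rightarrow> bool" where
  "is_lam t \<longleftrightarrow> (\<exists>b. t = Val (VLam b))"

definition coef :: "tdist \<Rightarrow> trm \<Rightarrow> complex" where
  "coef d t = (case canon d t of None \<Rightarrow> 0 | Some a \<Rightarrow> a)"

definition dinner :: "tdist \<Rightarrow> tdist \<Rightarrow> complex" where
  "dinner a b = (\<Sum>t\<in>atoms a \<inter> atoms b. cnj (coef a t) * coef b t)"

definition closed_val_dist :: "tdist \<Rightarrow> bool" where
  "closed_val_dist d \<longleftrightarrow> (\<forall>t\<in>atoms d. is_val t \<and> closed_t 0 t)"

definition S :: "tdist set" where
  "S = {d. closed_val_dist d \<and> dinner d d = 1}"

fun dsum :: "tdist list \<Rightarrow> tdist" where
  "dsum [] = DZero"
| "dsum (d # ds) = DPlus d (dsum ds)"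

definition Span :: "tdist set \<Rightarrow> tdist set" where
  "Span X = {d. \<exists>ds cs. ds \<noteq> [] \<and> length cs = length ds \<and> set ds \<subseteq> X \<and>
                         d \<equiv>\<^sub>d dsum (map2 DScal cs ds)}"

datatype ty = TU | TSum ty ty | TSharp ty | TArr ty ty

definition TB :: ty where "TB = TSum TU TU"

definition realizes :: "tdist \<Rightarrow> tdist set \<Rightarrow> bool" where
  "realizes t X \<longleftrightarrow> (\<exists>v\<in>X. reds t v)"

text \<open>For a distribution of abstractions sum alpha_i (lam x. t_i) and a value distribution v,
  the distribution sum alpha_i t_i<x:=v>.\<close>
definition app_body :: "tdist \<Rightarrow> tdist \<Rightarrow> tdist" where
  "app_body d v = dbind (\<lambda>t. case t of Val (VLam b) \<Rightarrow> bsubst b v | _ \<Rightarrow> DZero) d"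

primrec sem :: "ty \<Rightarrow> tdist set" where
  "sem TU = {d. d \<equiv>\<^sub>d DT (Val VStar)}"
| "sem (TSum A B) = {d. \<exists>v\<in>sem A. d \<equiv>\<^sub>d dmap inl_t v} \<union> {d. \<exists>w\<in>sem B. d \<equiv>\<^sub>d dmap inr_t w}"
| "sem (TSharp A) = Span (sem A) \<inter> S"
| "sem (TArr A B) = {d \<in> S. (\<forall>t\<in>atoms d. is_lam t) \<and>
                              (\<forall>v\<in>sem A. realizes (app_body d v) (sem B))}"

definition SpanB :: "tdist set" where
  "SpanB = Span {DT tt, DT ff}"

definition piB :: "tdist \<Rightarrow> complex \<times> complex" where
  "piB d = (coef d tt, coef d ff)"

definition represents :: "tdist \<Rightarrow> (complex \<times> complex \<Rightarrow> complex \<times> complex) \<Rightarrow> bool" where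
  "represents t F \<longleftrightarrow> (\<forall>v\<in>SpanB. \<exists>w\<in>SpanB. reds (dapp t v) w \<and> piB w = F (piB v))"

definition c2_inner :: "complex \<times> complex \<Rightarrow> complex \<times> complex \<Rightarrow> complex" where
  "c2_inner u v = cnj (fst u) * fst v + cnj (snd u) * snd v"

definition c2_linear :: "(complex \<times> complex \<Rightarrow> complex \<times> complex) \<Rightarrow> bool" where
  "c2_linear F \<longleftrightarrow> (\<forall>u v. F (fst u + fst v, snd u + snd v) = (fst (F u) + fst (F v), snd (F u) + snd (F v)))
                  \<and> (\<forall>a u. F (a * fst u, a * snd u) = (a * fst (F u), a * snd (F u)))"

definition unitary :: "(complex \<times> complex \<Rightarrow> complex \<times> complex) \<Rightarrow> bool" where
  "unitary F \<longleftrightarrow> c2_linear F \<and> (\<forall>u v. c2_inner (F u) (F v) = c2_inner u v)"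

end

theory Submission
  imports Defs
begin

(* Atomic reduction is deterministic, so a distribution reduces to a value distribution only by
   normalizing each of its atoms, and the result is determined up to congruence.  For a
   distribution d of abstractions and a Boolean vector v, both the substituted bodies
   sum_i alpha_i t_i<x:=v> (which the realizability semantics reduces) and the application d v
   (which "represents" reduces) therefore reduce to the same value distribution app_nf d v,
   bilinear in d and v; on Boolean inputs it is given by a 2x2 matrix bool_map d.  Realizing
   #B => #B says that this matrix maps unit vectors to unit vectors, which by polarization is
   equivalent to unitarity. *)

lemma canon_eq: "canon d t = (if t \<in> atoms d then Some (coef d t) else None)"
proof -
  have "t \<in> atoms d \<longleftrightarrow> canon d t \<noteq> None"
    by (induction d arbitrary: t rule: atoms.induct) (auto split: option.splits)
  then show ?thesis by (auto simp: coef_def split: option.split)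
qed

lemma coef_notin_atoms: "t \<notin> atoms d \<Longrightarrow> coef d t = 0"
  by (simp add: coef_def canon_eq)

lemma coef_DZero [simp]: "coef DZero t = 0"
  and coef_DT [simp]: "coef (DT s) t = (if t = s then 1 else 0)"
  and coef_DPlus [simp]: "coef (DPlus a b) t = coef a t + coef b t"
  and coef_DScal [simp]: "coef (DScal \<alpha> a) t = \<alpha> * coef a t"
  by (simp_all add: coef_def split: option.split)

lemma finite_atoms [simp]: "finite (atoms d)"
  by (induction d rule: atoms.induct) auto

lemma deq_iff: "a \<equiv>\<^sub>d b \<longleftrightarrow> atoms a = atoms b \<and> coef a = coef b"
proof
  assume "a \<equiv>\<^sub>d b"
  then have canon: "canon a t = canon b t" for t
    by (simp add: deq_def)
  have "t \<in> atoms a \<longleftrightarrow> t \<in> atoms b" for t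
    using canon[of t] by (simp add: canon_eq split: if_splits)
  then show "atoms a = atoms b \<and> coef a = coef b"
    using canon by (auto simp: coef_def)
qed (simp add: deq_def canon_eq fun_eq_iff)

lemma deq_refl [simp]: "a \<equiv>\<^sub>d a"
  and deq_sym: "a \<equiv>\<^sub>d b \<Longrightarrow> b \<equiv>\<^sub>d a"
  and deq_trans: "a \<equiv>\<^sub>d b \<Longrightarrow> b \<equiv>\<^sub>d c \<Longrightarrow> a \<equiv>\<^sub>d c"
  by (simp_all add: deq_def)

lemma atoms_dbind: "atoms (dbind f d) = (\<Union>t\<in>atoms d. atoms (f t))"
  by (induction d rule: atoms.induct) auto

lemma coef_dbind: "coef (dbind f d) u = (\<Sum>t\<in>atoms d. coef d t * coef (f t) u)"
proof (induction d rule: atoms.induct)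
  case (3 a b)
  have "(\<Sum>t\<in>atoms a \<union> atoms b. coef x t * coef (f t) u) = (\<Sum>t\<in>atoms x. coef x t * coef (f t) u)"
    if "x \<in> {a, b}" for x
    using that by (intro sum.mono_neutral_right) (auto simp: coef_notin_atoms)
  then show ?case using 3 by (simp add: distrib_right sum.distrib)
qed (auto simp: sum_distrib_left mult.assoc)

lemma dmap_eq_dbind: "dmap h d = dbind (\<lambda>t. DT (h t)) d"
  and dbind_dbind: "dbind g (dbind f d) = dbind (\<lambda>t. dbind g (f t)) d"
  and dbind_DT: "dbind DT d = d"
  by (induction d rule: atoms.induct) auto

lemma dbind_cong: "(\<And>t. t \<in> atoms d \<Longrightarrow> f t = g t) \<Longrightarrow> dbind f d = dbind g d"
  by (induction d rule: atoms.induct) auto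

lemma dbind_cong_deq: "(\<And>t. t \<in> atoms d \<Longrightarrow> f t \<equiv>\<^sub>d g t) \<Longrightarrow> dbind f d \<equiv>\<^sub>d dbind g d"
  unfolding deq_iff by (auto simp: atoms_dbind coef_dbind fun_eq_iff intro!: sum.cong)

lemma dbind_deq: "a \<equiv>\<^sub>d b \<Longrightarrow> dbind f a \<equiv>\<^sub>d dbind f b"
  unfolding deq_iff by (auto simp: atoms_dbind coef_dbind fun_eq_iff)

section \<open>Reduction\<close>

lemma not_atred_Val: "\<not> atred (Val v) D"
  by (auto elim: atred.cases)

lemma atred_deterministic: "atred s D1 \<Longrightarrow> atred s D2 \<Longrightarrow> D1 = D2"
proof (induction arbitrary: D2 rule: atred.induct)
  case (app_arg t t' s)
  from app_arg.prems show ?case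
    by (cases rule: atred.cases) (use app_arg.hyps not_atred_Val in \<open>auto dest: app_arg.IH\<close>)
next
  case (app_fun s s' v)
  from app_fun.prems show ?case
    by (cases rule: atred.cases) (use app_fun.hyps not_atred_Val in \<open>auto dest: app_fun.IH\<close>)
next
  case (seq_c t t' s)
  from seq_c.prems show ?case
    by (cases rule: atred.cases) (use seq_c.hyps not_atred_Val in \<open>auto dest: seq_c.IH\<close>)
next
  case (let_c t t' s)
  from let_c.prems show ?case
    by (cases rule: atred.cases) (use let_c.hyps not_atred_Val in \<open>auto dest: let_c.IH\<close>)
next
  case (match_c t t' s1 s2)
  from match_c.prems show ?case
    by (cases rule: atred.cases) (use match_c.hyps not_atred_Val in \<open>auto dest: match_c.IH\<close>)
qed (auto elim: atred.cases simp: not_atred_Val)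

lemma step_in_context: "step a a' \<Longrightarrow> step (DPlus (DScal c a) b) (DPlus (DScal c a') b)"
  unfolding step_def
proof (elim exE conjE)
  fix \<alpha> s r s'
  assume "a \<equiv>\<^sub>d DPlus (DScal \<alpha> (DT s)) r" "a' \<equiv>\<^sub>d DPlus (DScal \<alpha> s') r" "atred s s'"
  then show "\<exists>\<alpha> s r s'. DPlus (DScal c a) b \<equiv>\<^sub>d DPlus (DScal \<alpha> (DT s)) r \<and>
      DPlus (DScal c a') b \<equiv>\<^sub>d DPlus (DScal \<alpha> s') r \<and> atred s s'"
    by (intro exI[of _ "c * \<alpha>"] exI[of _ s] exI[of _ "DPlus (DScal c r) b"] exI[of _ s'])
      (auto simp: deq_iff fun_eq_iff algebra_simps)
qed

lemma reds_refl: "reds a a"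
  and reds_trans: "reds a b \<Longrightarrow> reds b c \<Longrightarrow> reds a c"
  and reds_if_step: "step a b \<Longrightarrow> reds a b"
  by (simp_all add: reds_def r_into_rtranclp)

lemma reds_deq_cong: "a \<equiv>\<^sub>d a' \<Longrightarrow> reds a' b' \<Longrightarrow> b' \<equiv>\<^sub>d b \<Longrightarrow> reds a b"
  unfolding reds_def
  by (metis (mono_tags, lifting) converse_rtranclp_into_rtranclp rtranclp.rtrancl_into_rtrancl)

lemma reds_in_context: "reds a a' \<Longrightarrow> reds (DPlus (DScal c a) b) (DPlus (DScal c a') b)"
  unfolding reds_def
  by (induction rule: rtranclp_induct)
    (auto intro: rtranclp.rtrancl_into_rtrancl step_in_context simp: deq_def)

lemma reds_DPlus: "reds a a' \<Longrightarrow> reds b b' \<Longrightarrow> reds (DPlus a b) (DPlus a' b')"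
proof -
  assume "reds a a'" "reds b b'"
  have "reds (DPlus a b) (DPlus a' b)"
    by (rule reds_deq_cong[OF _ reds_in_context[OF \<open>reds a a'\<close>, of 1 b]])
      (simp_all add: deq_iff fun_eq_iff)
  moreover have "reds (DPlus a' b) (DPlus a' b')"
    by (rule reds_deq_cong[OF _ reds_in_context[OF \<open>reds b b'\<close>, of 1 a']])
      (auto simp: deq_iff fun_eq_iff)
  ultimately show ?thesis by (rule reds_trans)
qed

lemma reds_DScal: "reds a a' \<Longrightarrow> reds (DScal c a) (DScal c a')"
  by (rule reds_deq_cong[OF _ reds_in_context[of a a' c DZero]]) (simp_all add: deq_iff fun_eq_iff)

lemma reds_dbind: "(\<And>t. t \<in> atoms d \<Longrightarrow> reds (DT t) (g t)) \<Longrightarrow> reds d (dbind g d)"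
  by (induction d rule: atoms.induct) (auto intro: reds_refl reds_DPlus reds_DScal)

lemma reds_if_atred: "atred s D \<Longrightarrow> reds (DT s) D"
  by (rule reds_if_step, unfold step_def)
    (intro exI[of _ 1] exI[of _ s] exI[of _ DZero] exI[of _ D], simp add: deq_iff fun_eq_iff)

section \<open>Normal forms\<close>

inductive normalizes_to :: "trm \<Rightarrow> tdist \<Rightarrow> bool" where
  Val: "normalizes_to (Val v) (DT (Val v))"
| atred: "atred s D \<Longrightarrow> (\<forall>t\<in>atoms D. normalizes_to t (g t)) \<Longrightarrow> normalizes_to s (dbind g D)"

lemma normalizes_to_unique: "normalizes_to s W1 \<Longrightarrow> normalizes_to s W2 \<Longrightarrow> W1 \<equiv>\<^sub>d W2"
proof (induction arbitrary: W2 rule: normalizes_to.induct)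
  case (Val v)
  from Val.prems show ?case by (cases rule: normalizes_to.cases) (auto simp: not_atred_Val)
next
  case (atred s D g)
  note hyps = atred.hyps and IH = atred.IH
  from atred.prems show ?case
  proof (cases rule: normalizes_to.cases)
    case (atred D' g')
    then have "D' = D" using hyps(1) atred_deterministic by blast
    then show ?thesis using atred IH by (auto intro!: dbind_cong_deq)
  qed (use hyps not_atred_Val in auto)
qed

lemma reds_if_normalizes_to: "normalizes_to s W \<Longrightarrow> reds (DT s) W"
proof (induction rule: normalizes_to.induct)
  case (atred s D g)
  then show ?case by (metis reds_dbind reds_if_atred reds_trans)
qed (rule reds_refl)

definition normalizing :: "trm \<Rightarrow> bool" where
  "normalizing s \<longleftrightarrow> (\<exists>W. normalizes_to s W)"

definition nf :: "trm \<Rightarrow> tdist" where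
  "nf s = (SOME W. normalizes_to s W)"

lemma normalizes_to_nf: "normalizing s \<Longrightarrow> normalizes_to s (nf s)"
  unfolding normalizing_def nf_def by (rule someI_ex)

lemma nf_deq_if_normalizes_to: "normalizes_to s W \<Longrightarrow> nf s \<equiv>\<^sub>d W"
  using normalizes_to_nf normalizes_to_unique normalizing_def by blast

lemma normalizing_atred:
  assumes "atred s D" "\<forall>t\<in>atoms D. normalizing t"
  shows "normalizing s" and "nf s \<equiv>\<^sub>d dbind nf D"
proof -
  have "normalizes_to s (dbind nf D)"
    using assms by (auto intro: normalizes_to.atred normalizes_to_nf)
  then show "normalizing s" "nf s \<equiv>\<^sub>d dbind nf D"
    by (auto simp: normalizing_def nf_deq_if_normalizes_to)
qed

definition has_nf :: "tdist \<Rightarrow> tdist \<Rightarrow> bool" where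
  "has_nf d w \<longleftrightarrow> (\<forall>t\<in>atoms d. normalizing t) \<and> w \<equiv>\<^sub>d dbind nf d"

lemma has_nf_deq: "d \<equiv>\<^sub>d d' \<Longrightarrow> has_nf d w \<longleftrightarrow> has_nf d' w"
  unfolding has_nf_def using dbind_deq[of d d' nf] by (auto simp: deq_iff)

lemma has_nf_step: "step d d' \<Longrightarrow> has_nf d' w \<Longrightarrow> has_nf d w"
proof -
  assume "step d d'" and "has_nf d' w"
  then obtain \<alpha> s r s' where
    d: "d \<equiv>\<^sub>d DPlus (DScal \<alpha> (DT s)) r" and d': "d' \<equiv>\<^sub>d DPlus (DScal \<alpha> s') r" and "atred s s'"
    unfolding step_def by blast
  (* r may still contain s: a step may reduce only part of the weight of an atom. *)
  from \<open>has_nf d' w\<close> have "has_nf (DPlus (DScal \<alpha> s') r) w"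
    using has_nf_deq[OF d'] by blast
  then have s': "\<forall>t\<in>atoms s'. normalizing t" and r: "\<forall>t\<in>atoms r. normalizing t"
    and w: "w \<equiv>\<^sub>d DPlus (DScal \<alpha> (dbind nf s')) (dbind nf r)"
    by (auto simp: has_nf_def)
  have "normalizing s" "nf s \<equiv>\<^sub>d dbind nf s'"
    using normalizing_atred[OF \<open>atred s s'\<close> s'] by auto
  then have "has_nf (DPlus (DScal \<alpha> (DT s)) r) w"
    using r w by (auto simp: has_nf_def deq_iff)
  then show ?thesis using has_nf_deq[OF d] by blast
qed

lemma reds_if_has_nf: "has_nf d w \<Longrightarrow> reds d w"
  unfolding has_nf_def
  by (metis deq_sym normalizes_to_nf reds_if_normalizes_to reds_dbind reds_deq_cong deq_refl)

lemma reds_value_dist_iff_has_nf: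
  assumes "\<forall>t\<in>atoms w. is_val t"
  shows "reds d w \<longleftrightarrow> has_nf d w"
proof
  assume "reds d w"
  then show "has_nf d w"
    unfolding reds_def
  proof (induction rule: converse_rtranclp_induct)
    case base
    have "normalizes_to t (DT t)" if "t \<in> atoms w" for t
      using that assms by (auto simp: is_val_def intro: normalizes_to.Val)
    then have "normalizing t \<and> nf t \<equiv>\<^sub>d DT t" if "t \<in> atoms w" for t
      using that by (auto simp: normalizing_def nf_deq_if_normalizes_to)
    then have "\<forall>t\<in>atoms w. normalizing t" "dbind nf w \<equiv>\<^sub>d dbind DT w"
      by (auto intro: dbind_cong_deq)
    then show ?case by (simp add: has_nf_def dbind_DT deq_sym)
  next
    case (step d d')
    then show ?case using has_nf_step has_nf_deq by blast
  qed
qed (rule reds_if_has_nf)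

definition beta_body :: "trm \<Rightarrow> trm \<Rightarrow> tdist" where
  "beta_body t x = (case t of
      Val (VLam b) \<Rightarrow> (case x of Val u \<Rightarrow> subst_d 0 u b | _ \<Rightarrow> DZero)
    | _ \<Rightarrow> DZero)"

definition app_normalizing :: "tdist \<Rightarrow> tdist \<Rightarrow> bool" where
  "app_normalizing d v \<longleftrightarrow> (\<forall>t\<in>atoms d. \<forall>x\<in>atoms v. \<forall>y\<in>atoms (beta_body t x). normalizing y)"

definition app_nf :: "tdist \<Rightarrow> tdist \<Rightarrow> tdist" where
  "app_nf d v = dbind (\<lambda>t. dbind (\<lambda>x. dbind nf (beta_body t x)) v) d"

lemma app_body_eq:
  assumes "\<forall>t\<in>atoms d. is_lam t"
  shows "app_body d v = dbind (\<lambda>t. dbind (beta_body t) v) d"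
  unfolding app_body_def
proof (rule dbind_cong)
  fix t assume "t \<in> atoms d"
  then obtain b where "t = Val (VLam b)" using assms by (auto simp: is_lam_def)
  moreover have "beta_body (Val (VLam b)) = (\<lambda>x. case x of Val u \<Rightarrow> subst_d 0 u b | _ \<Rightarrow> DZero)"
    by (simp add: beta_body_def fun_eq_iff)
  ultimately show "(case t of Val (VLam b) \<Rightarrow> bsubst b v | _ \<Rightarrow> DZero) = dbind (beta_body t) v"
    by (simp add: bsubst_def)
qed

lemma has_nf_app_body_iff:
  assumes "\<forall>t\<in>atoms d. is_lam t"
  shows "has_nf (app_body d v) w \<longleftrightarrow> app_normalizing d v \<and> w \<equiv>\<^sub>d app_nf d v"
  unfolding app_body_eq[OF assms] has_nf_def app_normalizing_def app_nf_def
  by (simp add: atoms_dbind dbind_dbind)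

lemma atred_App_beta_body:
  assumes "is_lam t" "is_val x"
  shows "atred (App t x) (beta_body t x)"
  using assms by (auto simp: is_lam_def is_val_def beta_body_def intro: atred.beta)

lemma normalizing_App_iff:
  assumes "is_lam t" "is_val x"
  shows "normalizing (App t x) \<longleftrightarrow> (\<forall>y\<in>atoms (beta_body t x). normalizing y)"
proof
  assume "normalizing (App t x)"
  then obtain W where "normalizes_to (App t x) W" by (auto simp: normalizing_def)
  then show "\<forall>y\<in>atoms (beta_body t x). normalizing y"
  proof (cases rule: normalizes_to.cases)
    case (atred D g)
    then have "D = beta_body t x"
      using atred_App_beta_body[OF assms] atred_deterministic by blast
    then show ?thesis using atred by (auto simp: normalizing_def)
  qed
qed (rule normalizing_atred(1)[OF atred_App_beta_body[OF assms]])

lemma has_nf_dapp_iff: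
  assumes "\<forall>t\<in>atoms d. is_lam t" "\<forall>x\<in>atoms v. is_val x"
  shows "has_nf (dapp d v) w \<longleftrightarrow> app_normalizing d v \<and> w \<equiv>\<^sub>d app_nf d v"
proof -
  have dapp: "dapp d v = dbind (\<lambda>t. dbind (\<lambda>x. DT (App t x)) v) d"
    by (simp add: dapp_def dmap_eq_dbind)
  have normalizing: "(\<forall>y\<in>atoms (dapp d v). normalizing y) \<longleftrightarrow> app_normalizing d v"
    unfolding dapp app_normalizing_def atoms_dbind using assms normalizing_App_iff by auto
  have "dbind nf (dapp d v) \<equiv>\<^sub>d app_nf d v" if "app_normalizing d v"
    unfolding dapp app_nf_def dbind_dbind
  proof (intro dbind_cong_deq)
    fix t x assume "t \<in> atoms d" "x \<in> atoms v"
    then show "dbind nf (DT (App t x)) \<equiv>\<^sub>d dbind nf (beta_body t x)"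
      using that assms normalizing_App_iff[of t x]
        normalizing_atred(2)[OF atred_App_beta_body[of t x]]
      by (auto simp: app_normalizing_def)
  qed
  then show ?thesis
    unfolding has_nf_def using normalizing by (auto intro: deq_trans deq_sym)
qed

lemma reds_app_body_iff:
  assumes "\<forall>t\<in>atoms d. is_lam t" "\<forall>y\<in>atoms w. is_val y"
  shows "reds (app_body d v) w \<longleftrightarrow> app_normalizing d v \<and> w \<equiv>\<^sub>d app_nf d v"
  using reds_value_dist_iff_has_nf[OF assms(2)] has_nf_app_body_iff[OF assms(1)] by blast

lemma reds_dapp_iff:
  assumes "\<forall>t\<in>atoms d. is_lam t" "\<forall>x\<in>atoms v. is_val x" "\<forall>y\<in>atoms w. is_val y"
  shows "reds (dapp d v) w \<longleftrightarrow> app_normalizing d v \<and> w \<equiv>\<^sub>d app_nf d v"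
  using reds_value_dist_iff_has_nf[OF assms(3)] has_nf_dapp_iff[OF assms(1,2)] by blast

lemma tt_ne_ff [simp]: "tt \<noteq> ff" "ff \<noteq> tt"
  by (auto simp: tt_def ff_def)

lemma is_val_if_bool_atoms: "atoms v \<subseteq> {tt, ff} \<Longrightarrow> \<forall>x\<in>atoms v. is_val x"
  by (auto simp: tt_def ff_def is_val_def)

lemma sum_bool_atoms:
  assumes "atoms v \<subseteq> {tt, ff}"
  shows "(\<Sum>x\<in>atoms v. coef v x * K x) = coef v tt * K tt + coef v ff * K ff"
proof -
  have "(\<Sum>x\<in>atoms v. coef v x * K x) = (\<Sum>x\<in>{tt, ff}. coef v x * K x)"
    using assms by (intro sum.mono_neutral_left) (auto simp: coef_notin_atoms)
  then show ?thesis by simp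
qed

lemma atoms_dsum: "length cs = length ds \<Longrightarrow> atoms (dsum (map2 DScal cs ds)) = (\<Union>x\<in>set ds. atoms x)"
  by (induction ds arbitrary: cs) (auto simp: length_Suc_conv)

lemma Span_bool_iff:
  assumes "\<forall>x\<in>X. atoms x = {tt} \<or> atoms x = {ff}" "DT tt \<in> X" "DT ff \<in> X"
  shows "v \<in> Span X \<longleftrightarrow> atoms v \<subseteq> {tt, ff} \<and> atoms v \<noteq> {}"
proof
  assume "v \<in> Span X"
  then obtain ds cs where "ds \<noteq> []" "length cs = length ds" "set ds \<subseteq> X"
    and "v \<equiv>\<^sub>d dsum (map2 DScal cs ds)"
    unfolding Span_def by blast
  then have atoms_v: "atoms v = (\<Union>x\<in>set ds. atoms x)" and "set ds \<noteq> {}"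
    by (simp_all add: atoms_dsum deq_iff)
  have "atoms x = {tt} \<or> atoms x = {ff}" if "x \<in> set ds" for x
    using assms(1) \<open>set ds \<subseteq> X\<close> that by (meson subsetD)
  then show "atoms v \<subseteq> {tt, ff} \<and> atoms v \<noteq> {}"
    unfolding atoms_v using \<open>set ds \<noteq> {}\<close> by fastforce
next
  assume v: "atoms v \<subseteq> {tt, ff} \<and> atoms v \<noteq> {}"
  have coef: "coef v y = 0" if "y \<notin> atoms v" for y
    using that by (rule coef_notin_atoms)
  consider "atoms v = {tt, ff}" | "atoms v = {tt}" | "atoms v = {ff}"
    using v by blast
  then show "v \<in> Span X"
  proof cases
    case 1
    then show ?thesis unfolding Span_def using assms coef
      by (intro CollectI exI[of _ "[DT tt, DT ff]"] exI[of _ "[coef v tt, coef v ff]"])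
        (auto simp: deq_iff fun_eq_iff)
  next
    case 2
    then show ?thesis unfolding Span_def using assms coef
      by (intro CollectI exI[of _ "[DT tt]"] exI[of _ "[coef v tt]"]) (auto simp: deq_iff fun_eq_iff)
  next
    case 3
    then show ?thesis unfolding Span_def using assms coef
      by (intro CollectI exI[of _ "[DT ff]"] exI[of _ "[coef v ff]"]) (auto simp: deq_iff fun_eq_iff)
  qed
qed

lemma SpanB_iff: "v \<in> SpanB \<longleftrightarrow> atoms v \<subseteq> {tt, ff} \<and> atoms v \<noteq> {}"
  unfolding SpanB_def by (rule Span_bool_iff) auto

lemma sem_TB: "sem TB = {x. x \<equiv>\<^sub>d DT tt \<or> x \<equiv>\<^sub>d DT ff}"
proof -
  have dmap: "dmap f v \<equiv>\<^sub>d dmap f (DT (Val VStar))" if "v \<equiv>\<^sub>d DT (Val VStar)" for f v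
    using dbind_deq[OF that] by (simp add: dmap_eq_dbind)
  have tt: "dmap inl_t (DT (Val VStar)) = DT tt" and ff: "dmap inr_t (DT (Val VStar)) = DT ff"
    by (simp_all add: inl_t_def inr_t_def tt_def ff_def)
  show ?thesis
  proof (rule set_eqI)
    fix x
    have "x \<in> sem TB \<longleftrightarrow>
        (\<exists>v. v \<equiv>\<^sub>d DT (Val VStar) \<and> (x \<equiv>\<^sub>d dmap inl_t v \<or> x \<equiv>\<^sub>d dmap inr_t v))"
      by (auto simp: TB_def)
    also have "\<dots> \<longleftrightarrow> x \<equiv>\<^sub>d DT tt \<or> x \<equiv>\<^sub>d DT ff"
      using dmap[of _ inl_t, unfolded tt] dmap[of _ inr_t, unfolded ff] tt ff
      by (metis deq_refl deq_trans)
    finally show "x \<in> sem TB \<longleftrightarrow> x \<in> {x. x \<equiv>\<^sub>d DT tt \<or> x \<equiv>\<^sub>d DT ff}" by simp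
  qed
qed

lemma dinner_bool: "atoms v \<subseteq> {tt, ff} \<Longrightarrow> dinner v v = c2_inner (piB v) (piB v)"
  using sum_bool_atoms[of v "\<lambda>x. cnj (coef v x)"]
  by (simp add: dinner_def piB_def c2_inner_def mult.commute)

lemma sem_sharp_bool_iff: "v \<in> sem (TSharp TB) \<longleftrightarrow> v \<in> SpanB \<and> c2_inner (piB v) (piB v) = 1"
proof -
  have "v \<in> Span (sem TB) \<longleftrightarrow> atoms v \<subseteq> {tt, ff} \<and> atoms v \<noteq> {}"
    by (rule Span_bool_iff) (auto simp: sem_TB deq_iff)
  then show ?thesis
    by (auto simp: SpanB_iff S_def closed_val_dist_def dinner_bool tt_def ff_def is_val_def)
qed

lemma SpanB_deq: "w \<equiv>\<^sub>d w' \<Longrightarrow> w \<in> SpanB \<longleftrightarrow> w' \<in> SpanB"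
  and piB_deq: "w \<equiv>\<^sub>d w' \<Longrightarrow> piB w = piB w'"
  by (simp_all add: SpanB_iff piB_def deq_iff)

lemma sem_sharp_bool_deq: "w \<equiv>\<^sub>d w' \<Longrightarrow> w \<in> sem (TSharp TB) \<longleftrightarrow> w' \<in> sem (TSharp TB)"
  unfolding sem_sharp_bool_iff using SpanB_deq piB_deq by metis

lemma is_val_if_SpanB: "w \<in> SpanB \<Longrightarrow> \<forall>y\<in>atoms w. is_val y"
  unfolding SpanB_iff using is_val_if_bool_atoms by blast

definition bool_vec :: "complex \<times> complex \<Rightarrow> tdist" where
  "bool_vec u = DPlus (DScal (fst u) (DT tt)) (DScal (snd u) (DT ff))"

lemma atoms_bool_vec: "atoms (bool_vec u) = {tt, ff}"
  and piB_bool_vec: "piB (bool_vec u) = u"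
  by (auto simp: bool_vec_def piB_def)

lemma bool_vec_in_sem: "c2_inner u u = 1 \<Longrightarrow> bool_vec u \<in> sem (TSharp TB)"
  unfolding sem_sharp_bool_iff SpanB_iff by (simp add: atoms_bool_vec piB_bool_vec)

section \<open>Unitary 2x2 matrices\<close>

definition c2_matrix :: "complex \<Rightarrow> complex \<Rightarrow> complex \<Rightarrow> complex \<Rightarrow> complex \<times> complex \<Rightarrow> complex \<times> complex"
  where "c2_matrix a b c e u = (fst u * a + snd u * c, fst u * b + snd u * e)"

lemma c2_linear_c2_matrix: "c2_linear (c2_matrix a b c e)"
  by (simp add: c2_linear_def c2_matrix_def algebra_simps)

lemma unitary_c2_matrix_if_preserves_unit_norm:
  assumes "\<And>u. c2_inner u u = 1 \<Longrightarrow> c2_inner (c2_matrix a b c e u) (c2_matrix a b c e u) = 1"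
  shows "unitary (c2_matrix a b c e)"
proof -
  define X where "X = c2_inner (a, b) (c, e)"
  have gram: "c2_inner (c2_matrix a b c e u) (c2_matrix a b c e u') =
      cnj (fst u) * fst u' * c2_inner (a, b) (a, b) + cnj (fst u) * snd u' * X
      + cnj (snd u) * fst u' * cnj X + cnj (snd u) * snd u' * c2_inner (c, e) (c, e)" for u u'
    by (simp add: c2_inner_def c2_matrix_def X_def algebra_simps)
  have col1: "c2_inner (a, b) (a, b) = 1" and col2: "c2_inner (c, e) (c, e) = 1"
    using assms[of "(1, 0)", unfolded gram] assms[of "(0, 1)", unfolded gram]
    by (simp_all add: c2_inner_def)
  (* Polarization: the unit vectors (1, 1)/sqrt 2 and (1, i)/sqrt 2 detect the real and the
     imaginary part of the inner product X of the two columns. *)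
  define r where "r = complex_of_real (1 / sqrt 2)"
  have r: "cnj r = r" "r \<noteq> 0" and rr: "2 * (r * r) = 1"
    by (simp_all add: r_def flip: of_real_mult)
  have "c2_inner (r, r) (r, r) = 1" and "c2_inner (r, \<i> * r) (r, \<i> * r) = 1"
    unfolding rr[symmetric] by (simp_all add: c2_inner_def r algebra_simps flip: power2_eq_square)
  then have "c2_inner (c2_matrix a b c e (r, r)) (c2_matrix a b c e (r, r)) = 2 * (r * r)"
    and "c2_inner (c2_matrix a b c e (r, \<i> * r)) (c2_matrix a b c e (r, \<i> * r)) = 2 * (r * r)"
    unfolding rr by (simp_all add: assms)
  then have "r * r * (2 + X + cnj X) = r * r * 2" and "r * r * (2 + \<i> * (X - cnj X)) = r * r * 2"
    unfolding gram by (simp_all add: r col1 col2 algebra_simps)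
  then have re: "X + cnj X = 0" and im: "X - cnj X = 0"
    using r by simp_all
  have "2 * X = (X + cnj X) + (X - cnj X)"
    by simp
  then have "X = 0"
    unfolding re im by simp
  then show ?thesis
    unfolding unitary_def gram col1 col2 by (simp add: c2_inner_def c2_linear_c2_matrix)
qed

(* amp d x y is the coefficient of y in app_nf d (DT x). *)
definition amp :: "tdist \<Rightarrow> trm \<Rightarrow> trm \<Rightarrow> complex" where
  "amp d x y = (\<Sum>t\<in>atoms d. coef d t * coef (dbind nf (beta_body t x)) y)"

lemma coef_app_nf:
  assumes "atoms v \<subseteq> {tt, ff}"
  shows "coef (app_nf d v) y = coef v tt * amp d tt y + coef v ff * amp d ff y"
proof -
  have "coef (app_nf d v) y =
      (\<Sum>t\<in>atoms d. coef d t * (coef v tt * coef (dbind nf (beta_body t tt)) y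
                                  + coef v ff * coef (dbind nf (beta_body t ff)) y))"
    unfolding app_nf_def coef_dbind[of _ d] coef_dbind[of _ v] sum_bool_atoms[OF assms] ..
  then show ?thesis
    by (simp add: amp_def sum_distrib_left sum.distrib algebra_simps)
qed

lemma atoms_app_nf: "atoms (app_nf d v) = (\<Union>x\<in>atoms v. atoms (app_nf d (DT x)))"
  unfolding app_nf_def atoms_dbind by auto

definition bool_map :: "tdist \<Rightarrow> complex \<times> complex \<Rightarrow> complex \<times> complex" where
  "bool_map d = c2_matrix (amp d tt tt) (amp d tt ff) (amp d ff tt) (amp d ff ff)"

lemma piB_app_nf: "atoms v \<subseteq> {tt, ff} \<Longrightarrow> piB (app_nf d v) = bool_map d (piB v)"
  by (simp add: piB_def bool_map_def c2_matrix_def coef_app_nf)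

lemma app_normalizing_mono: "atoms v \<subseteq> atoms v' \<Longrightarrow> app_normalizing d v' \<Longrightarrow> app_normalizing d v"
  unfolding app_normalizing_def by blast

lemma app_nf_in_SpanB:
  assumes "app_nf d (DT tt) \<in> SpanB" "app_nf d (DT ff) \<in> SpanB" "v \<in> SpanB"
  shows "app_nf d v \<in> SpanB"
proof -
  have "atoms (app_nf d (DT x)) \<subseteq> {tt, ff} \<and> atoms (app_nf d (DT x)) \<noteq> {}" if "x \<in> atoms v" for x
    using assms that by (auto simp: SpanB_iff)
  then show ?thesis
    using assms(3) by (auto simp: SpanB_iff atoms_app_nf[of d v])
qed

lemma sem_arrow_sharp_bool_iff:
  assumes "d \<in> S" "\<forall>t\<in>atoms d. is_lam t"
  shows "d \<in> sem (TArr (TSharp TB) (TSharp TB)) \<longleftrightarrow>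
    (\<forall>v\<in>sem (TSharp TB). app_normalizing d v \<and> app_nf d v \<in> sem (TSharp TB))"
proof -
  have "realizes (app_body d v) (sem (TSharp TB)) \<longleftrightarrow>
      app_normalizing d v \<and> app_nf d v \<in> sem (TSharp TB)" for v
  proof -
    have reds: "reds (app_body d v) w \<longleftrightarrow> app_normalizing d v \<and> w \<equiv>\<^sub>d app_nf d v"
      if "w \<in> sem (TSharp TB)" for w
      using that unfolding sem_sharp_bool_iff
      by (intro reds_app_body_iff[OF assms(2)] is_val_if_SpanB) blast
    show ?thesis
      unfolding realizes_def using reds sem_sharp_bool_deq by (meson deq_refl)
  qed
  then show ?thesis
    using assms by simp
qed

lemma represents_iff:
  assumes "\<forall>t\<in>atoms d. is_lam t"
  shows "represents d F \<longleftrightarrow>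
    (\<forall>v\<in>SpanB. app_normalizing d v \<and> app_nf d v \<in> SpanB \<and> piB (app_nf d v) = F (piB v))"
proof -
  have "(\<exists>w\<in>SpanB. reds (dapp d v) w \<and> piB w = F (piB v)) \<longleftrightarrow>
      app_normalizing d v \<and> app_nf d v \<in> SpanB \<and> piB (app_nf d v) = F (piB v)"
    if "v \<in> SpanB" for v
  proof -
    have reds: "reds (dapp d v) w \<longleftrightarrow> app_normalizing d v \<and> w \<equiv>\<^sub>d app_nf d v"
      if "w \<in> SpanB" for w
      using that by (intro reds_dapp_iff[OF assms] is_val_if_SpanB \<open>v \<in> SpanB\<close>)
    show ?thesis
    proof
      assume "\<exists>w\<in>SpanB. reds (dapp d v) w \<and> piB w = F (piB v)"
      then obtain w where "w \<in> SpanB" "reds (dapp d v) w" "piB w = F (piB v)"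
        by blast
      then show "app_normalizing d v \<and> app_nf d v \<in> SpanB \<and> piB (app_nf d v) = F (piB v)"
        using reds SpanB_deq piB_deq by metis
    qed (use reds[of "app_nf d v"] in auto)
  qed
  then show ?thesis
    unfolding represents_def by blast
qed

lemma unitary_bool_map:
  assumes "\<And>v. v \<in> sem (TSharp TB) \<Longrightarrow> app_nf d v \<in> sem (TSharp TB)"
  shows "unitary (bool_map d)"
  unfolding bool_map_def
proof (rule unitary_c2_matrix_if_preserves_unit_norm, fold bool_map_def)
  fix u :: "complex \<times> complex"
  assume "c2_inner u u = 1"
  then have "app_nf d (bool_vec u) \<in> sem (TSharp TB)"
    by (intro assms bool_vec_in_sem)
  then show "c2_inner (bool_map d u) (bool_map d u) = 1"
    unfolding sem_sharp_bool_iff using piB_app_nf[of "bool_vec u" d]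
    by (simp add: atoms_bool_vec piB_bool_vec)
qed

lemma represents_bool_map:
  assumes "\<forall>t\<in>atoms d. is_lam t"
    and sem: "\<And>v. v \<in> sem (TSharp TB) \<Longrightarrow> app_normalizing d v \<and> app_nf d v \<in> sem (TSharp TB)"
  shows "represents d (bool_map d)"
  unfolding represents_iff[OF assms(1)]
proof
  fix v assume "v \<in> SpanB"
  then have v: "atoms v \<subseteq> {tt, ff}"
    by (simp add: SpanB_iff)
  (* bool_vec (1, 0) keeps the atom ff with coefficient 0, so it covers every Boolean vector. *)
  have "bool_vec (1, 0) \<in> sem (TSharp TB)"
    by (rule bool_vec_in_sem) (simp add: c2_inner_def)
  then have "app_normalizing d v"
    using sem v atoms_bool_vec app_normalizing_mono by metis
  moreover have "DT tt \<in> sem (TSharp TB)" "DT ff \<in> sem (TSharp TB)"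
    unfolding sem_sharp_bool_iff SpanB_iff by (simp_all add: piB_def c2_inner_def)
  then have "app_nf d v \<in> SpanB"
    using sem \<open>v \<in> SpanB\<close> app_nf_in_SpanB unfolding sem_sharp_bool_iff by metis
  ultimately show "app_normalizing d v \<and> app_nf d v \<in> SpanB \<and> piB (app_nf d v) = bool_map d (piB v)"
    using piB_app_nf[OF v] by blast
qed

lemma app_nf_in_sem_if_represents_unitary:
  assumes "\<forall>t\<in>atoms d. is_lam t" "unitary F" "represents d F" "v \<in> sem (TSharp TB)"
  shows "app_normalizing d v \<and> app_nf d v \<in> sem (TSharp TB)"
proof -
  from assms(4) have "v \<in> SpanB" and unit: "c2_inner (piB v) (piB v) = 1"
    unfolding sem_sharp_bool_iff by blast+
  then have "app_normalizing d v" "app_nf d v \<in> SpanB" "piB (app_nf d v) = F (piB v)"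
    using assms(3) unfolding represents_iff[OF assms(1)] by blast+
  moreover have "c2_inner (F (piB v)) (F (piB v)) = 1"
    using assms(2) unit unfolding unitary_def by metis
  ultimately show ?thesis
    unfolding sem_sharp_bool_iff by simp
qed

theorem mainTheorem2:
  fixes d :: tdist
  assumes "d \<in> S"
    and "\<forall>t\<in>atoms d. is_lam t \<and> closed_t 0 t"
  shows "d \<in> sem (TArr (TSharp TB) (TSharp TB)) \<longleftrightarrow> (\<exists>F. unitary F \<and> represents d F)"
proof -
  have lams: "\<forall>t\<in>atoms d. is_lam t"
    using assms(2) by blast
  have "d \<in> sem (TArr (TSharp TB) (TSharp TB)) \<longleftrightarrow>
      (\<forall>v\<in>sem (TSharp TB). app_normalizing d v \<and> app_nf d v \<in> sem (TSharp TB))"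
    by (rule sem_arrow_sharp_bool_iff[OF assms(1) lams])
  also have "\<dots> \<longleftrightarrow> (\<exists>F. unitary F \<and> represents d F)"
    using unitary_bool_map represents_bool_map[OF lams] app_nf_in_sem_if_represents_unitary[OF lams]
    by blast
  finally show ?thesis .
qed

end
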